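(* Let $G = K \rtimes_\varphi \langle t\rangle$ be a finitely generated group, where $K$ is abelian, $\langle t\rangle$ is infinite cyclic and $\varphi\in\mathrm{Aut}(K)$. Then the set of periodic points $P_\varphi=\{a\in K:\ \varphi^n(a)=a\text{ for some } n\ge1\}$ is a finitely generated subgroup of $K$ satisfying $\varphi(P_\varphi)=P_\varphi$.
   Context: $K$ is written additively and $tkt^{-1}=\varphi(k)$. *)

theory Defs
  imports "HOL-Algebra.Algebra"
begin

definition aut_pow :: "('a, 'b) monoid_scheme \<Rightarrow> ('a \<Rightarrow> 'a) \<Rightarrow> int \<Rightarrow> 'a \<Rightarrow> 'a" where
  "aut_pow K \<phi> m = (if 0 \<le> m then \<phi> ^^ nat m else (inv_into (carrier K) \<phi>) ^^ nat (- m))"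

text \<open>The semidirect product K by the infinite cyclic group generated by t, with t k t^-1 = phi k.
  The pair (a, m) represents a t^m, so (a t^m)(b t^n) = (a phi^m(b)) t^(m+n).\<close>
definition semidirect_Z :: "('a, 'b) monoid_scheme \<Rightarrow> ('a \<Rightarrow> 'a) \<Rightarrow> ('a \<times> int) monoid" where
  "semidirect_Z K \<phi> =
     \<lparr> carrier = carrier K \<times> (UNIV :: int set),
       monoid.mult = (\<lambda>(a, m) (b, n). (a \<otimes>\<^bsub>K\<^esub> aut_pow K \<phi> m b, m + n)),
       monoid.one = (\<one>\<^bsub>K\<^esub>, 0) \<rparr>"

definition finitely_generated_group :: "('a, 'b) monoid_scheme \<Rightarrow> bool" where
  "finitely_generated_group G \<longleftrightarrow>
     (\<exists>S. finite S \<and> S \<subseteq> carrier G \<and> generate G S = carrier G)"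

definition periodic_points :: "('a, 'b) monoid_scheme \<Rightarrow> ('a \<Rightarrow> 'a) \<Rightarrow> 'a set" where
  "periodic_points K \<phi> = {a \<in> carrier K. \<exists>n::nat. n \<ge> 1 \<and> (\<phi> ^^ n) a = a}"

end

theory Submission
  imports
    Defs
    "HOL-Computational_Algebra.Polynomial"
    "HOL-Computational_Algebra.Group_Closure"
begin

text \<open>Let \<open>t\<close> act on \<open>K\<close> as \<open>\<phi>\<close>. This makes \<open>K\<close> a module over \<open>\<int>[t, t\<^sup>-\<^sup>1]\<close>, and finite
  generation of \<open>K \<rtimes> \<langle>t\<rangle>\<close> makes it a finitely generated module (the first components of
  a finite generating set span it). Since \<open>\<int>[t]\<close> is Noetherian, every submodule of a finitely
  generated module is finitely generated: by induction on the number of generators, the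
  submodule is spanned by its part in the span of the remaining generators together with
  finitely many lifts of generators of an ideal of \<open>\<int>[t]\<close>, and that ideal is finitely generated by
  the leading-coefficient argument of the Hilbert basis theorem. The periodic points form a
  submodule, so they are spanned by finitely many periodic points; their \<open>\<phi>\<close>-orbits are finite
  and together generate \<open>P\<^sub>\<phi>\<close> as a group.\<close>


section \<open>Ideals of \<open>\<int>[x]\<close> are finitely generated\<close>

lemma group_closure_eq_self:
  fixes S :: "'a::ab_group_add set"
  assumes "0 \<in> S" and "\<And>c d. c \<in> S \<Longrightarrow> d \<in> S \<Longrightarrow> c - d \<in> S"
  shows "group_closure S = S"
proof
  show "group_closure S \<subseteq> S"
  proof
    fix s assume "s \<in> group_closure S"
    then show "s \<in> S" by induction (use assms in auto)
  qed
qed (auto intro: group_closure.base)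

lemma int_subgroup_chain_stabilizes:
  fixes L :: "nat \<Rightarrow> int set"
  assumes "\<And>e. 0 \<in> L e" and "\<And>e c d. c \<in> L e \<Longrightarrow> d \<in> L e \<Longrightarrow> c - d \<in> L e"
    and "mono L"
  obtains D where "\<And>e. D \<le> e \<Longrightarrow> L e = L D"
proof -
  define U where "U = (\<Union>e. L e)"
  have "group_closure U = U"
  proof (rule group_closure_eq_self)
    show "0 \<in> U" using assms(1) by (auto simp: U_def)
    fix c d assume "c \<in> U" "d \<in> U"
    then obtain e1 e2 where "c \<in> L e1" "d \<in> L e2" by (auto simp: U_def)
    then have "c \<in> L (max e1 e2)" "d \<in> L (max e1 e2)"
      using monoD[OF \<open>mono L\<close>, of e1 "max e1 e2"] monoD[OF \<open>mono L\<close>, of e2 "max e1 e2"] by auto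
    then show "c - d \<in> U" using assms(2) by (auto simp: U_def)
  qed
  then obtain D where D: "Gcd U \<in> L D"
    using Gcd_in_group_closure[of U] by (auto simp: U_def)
  have "L e \<subseteq> L D" for e
  proof
    fix c assume "c \<in> L e"
    then have "Gcd U dvd c" by (auto simp: U_def intro: Gcd_dvd)
    then obtain z where "c = Gcd U * z" ..
    also have "\<dots> \<in> group_closure (L D)"
      using D by (intro group_closure_mult_left) (auto intro: group_closure.base)
    also have "group_closure (L D) = L D"
      using assms(1,2) by (rule group_closure_eq_self)
    finally show "c \<in> L D" .
  qed
  then show thesis using that monoD[OF \<open>mono L\<close>] by (meson subset_antisym)
qed

text \<open>Closure under subtraction and under multiplication by \<open>x\<close> amounts to being an ideal of
  \<open>\<int>[x]\<close>.\<close>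
definition int_poly_ideal :: "int poly set \<Rightarrow> bool" where
  "int_poly_ideal I \<longleftrightarrow> 0 \<in> I \<and> (\<forall>p\<in>I. \<forall>q\<in>I. p - q \<in> I) \<and> (\<forall>p\<in>I. pCons 0 p \<in> I)"

lemma int_poly_ideal_add:
  "int_poly_ideal I \<Longrightarrow> p \<in> I \<Longrightarrow> q \<in> I \<Longrightarrow> p + q \<in> I"
  unfolding int_poly_ideal_def by (metis diff_0 diff_minus_eq_add)

lemma int_poly_ideal_smult:
  assumes I: "int_poly_ideal I" and p: "p \<in> I"
  shows "smult z p \<in> I"
proof -
  have nat: "smult (int n) p \<in> I" for n
    by (induction n) (use I p in \<open>auto simp: int_poly_ideal_def smult_add_left intro: int_poly_ideal_add\<close>)
  show ?thesis
  proof (cases "0 \<le> z")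
    case True then show ?thesis using nat[of "nat z"] by simp
  next
    case False
    then have "smult z p = 0 - smult (int (nat (- z))) p" by simp
    then show ?thesis using nat I unfolding int_poly_ideal_def by metis
  qed
qed

lemma int_poly_ideal_monom_mult:
  assumes "int_poly_ideal I" and "p \<in> I"
  shows "monom 1 j * p \<in> I"
  by (induction j) (use assms in \<open>auto simp: int_poly_ideal_def monom_Suc\<close>)

lemma coeff_monom_mult_shift: "coeff (monom 1 j * p) (e + j) = coeff p e" for p :: "'a::comm_semiring_1 poly"
  by (simp add: coeff_monom_mult)

lemma degree_monom_mult_le: "degree (monom 1 j * p) \<le> degree p + j" for p :: "'a::comm_semiring_1 poly"
  by (metis add.commute degree_monom_le degree_mult_le le_trans add_le_mono1)

definition leading_coeffs :: "int poly set \<Rightarrow> nat \<Rightarrow> int set" where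
  "leading_coeffs I e = {coeff p e | p. p \<in> I \<and> degree p \<le> e}"

lemma leading_coeffs_zero: "int_poly_ideal I \<Longrightarrow> 0 \<in> leading_coeffs I e"
  unfolding leading_coeffs_def int_poly_ideal_def by (auto intro!: exI[of _ 0])

lemma leading_coeffs_diff:
  assumes I: "int_poly_ideal I" and c: "c \<in> leading_coeffs I e" and d: "d \<in> leading_coeffs I e"
  shows "c - d \<in> leading_coeffs I e"
proof -
  obtain p where p: "p \<in> I" "degree p \<le> e" "c = coeff p e" using c by (auto simp: leading_coeffs_def)
  obtain q where q: "q \<in> I" "degree q \<le> e" "d = coeff q e" using d by (auto simp: leading_coeffs_def)
  have "p - q \<in> I" using I p(1) q(1) by (simp add: int_poly_ideal_def)
  moreover have "degree (p - q) \<le> e" using p(2) q(2) by (rule degree_diff_le)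
  ultimately show ?thesis
    using p(3) q(3) unfolding leading_coeffs_def by (auto intro!: exI[of _ "p - q"])
qed

lemma leading_coeffs_mono:
  assumes I: "int_poly_ideal I"
  shows "mono (leading_coeffs I)"
proof (rule monoI, rule subsetI)
  fix e e' c assume "e \<le> e'" "c \<in> leading_coeffs I e"
  then obtain p where p: "p \<in> I" "degree p \<le> e" "c = coeff p e" by (auto simp: leading_coeffs_def)
  let ?q = "monom 1 (e' - e) * p"
  have "?q \<in> I" using I p(1) by (rule int_poly_ideal_monom_mult)
  moreover have "degree ?q \<le> e'"
    using degree_monom_mult_le[of "e' - e" p] p(2) \<open>e \<le> e'\<close> by linarith
  moreover have "coeff ?q e' = c"
    using coeff_monom_mult_shift[of "e' - e" p e] p(3) \<open>e \<le> e'\<close> by simp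
  ultimately show "c \<in> leading_coeffs I e'" unfolding leading_coeffs_def by blast
qed

lemma Gcd_leading_coeffs_mem: "int_poly_ideal I \<Longrightarrow> Gcd (leading_coeffs I e) \<in> leading_coeffs I e"
  using Gcd_in_group_closure[of "leading_coeffs I e"]
    group_closure_eq_self[OF leading_coeffs_zero leading_coeffs_diff]
  by simp

lemma int_poly_ideal_subset_by_leading_coeffs:
  assumes I: "int_poly_ideal I" and S: "int_poly_ideal S"
    and lead: "\<And>e. \<exists>q \<in> I \<inter> S. degree q \<le> e \<and> coeff q e = Gcd (leading_coeffs I e)"
  shows "I \<subseteq> S"
proof -
  have "p \<in> S" if "p \<in> I" and "\<forall>i\<ge>n. coeff p i = 0" for n p
    using that
  proof (induction n arbitrary: p)
    case 0
    then have "p = 0" by (auto intro: poly_eqI)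
    then show ?case using S by (simp add: int_poly_ideal_def)
  next
    case (Suc n)
    have "degree p \<le> n" using Suc.prems(2) by (auto intro: degree_le)
    then have "coeff p n \<in> leading_coeffs I n" using Suc.prems(1) by (auto simp: leading_coeffs_def)
    then have "Gcd (leading_coeffs I n) dvd coeff p n" by (rule Gcd_dvd)
    then obtain z where z: "coeff p n = Gcd (leading_coeffs I n) * z" ..
    obtain q where q: "q \<in> I" "q \<in> S" "degree q \<le> n" "coeff q n = Gcd (leading_coeffs I n)"
      using lead by blast
    let ?r = "p - smult z q"
    have "?r \<in> I" using I Suc.prems(1) q(1) int_poly_ideal_smult by (auto simp: int_poly_ideal_def)
    moreover have "\<forall>i\<ge>n. coeff ?r i = 0"
    proof (intro allI impI)
      fix i assume "n \<le> i"
      then consider "i = n" | "n < i" by linarith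
      then show "coeff ?r i = 0"
        using z q(3,4) \<open>degree p \<le> n\<close> by cases (simp_all add: coeff_eq_0)
    qed
    ultimately have "?r \<in> S" by (rule Suc.IH)
    moreover have "smult z q \<in> S" using S q(2) by (rule int_poly_ideal_smult)
    ultimately have "?r + smult z q \<in> S" using S by (blast intro: int_poly_ideal_add)
    then show ?case by simp
  qed
  then show ?thesis using coeff_eq_0 by (meson Suc_le_lessD subsetI)
qed

theorem int_poly_ideal_finitely_generated:
  assumes I: "int_poly_ideal I"
  obtains G where "finite G" and "G \<subseteq> I" and "\<And>S. int_poly_ideal S \<Longrightarrow> G \<subseteq> S \<Longrightarrow> I \<subseteq> S"
proof -
  let ?L = "leading_coeffs I"
  obtain D where D: "\<And>e. D \<le> e \<Longrightarrow> ?L e = ?L D"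
    using int_subgroup_chain_stabilizes[of ?L] leading_coeffs_zero[OF I] leading_coeffs_diff[OF I]
      leading_coeffs_mono[OF I] by blast
  have "\<forall>e. \<exists>w. w \<in> I \<and> degree w \<le> e \<and> coeff w e = Gcd (?L e)"
  proof
    fix e
    obtain w where "w \<in> I" "degree w \<le> e" "Gcd (?L e) = coeff w e"
      using Gcd_leading_coeffs_mem[OF I, of e] by (auto simp: leading_coeffs_def)
    then show "\<exists>w. w \<in> I \<and> degree w \<le> e \<and> coeff w e = Gcd (?L e)" by auto
  qed
  then obtain w where w: "\<And>e. w e \<in> I" "\<And>e. degree (w e) \<le> e" "\<And>e. coeff (w e) e = Gcd (?L e)"
    by metis
  show thesis
  proof (rule that[of "w ` {..D}"])
    show "finite (w ` {..D})" "w ` {..D} \<subseteq> I" using w by auto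
    fix S assume S: "int_poly_ideal S" and wS: "w ` {..D} \<subseteq> S"
    show "I \<subseteq> S"
    proof (rule int_poly_ideal_subset_by_leading_coeffs[OF I S])
      fix e
      show "\<exists>q \<in> I \<inter> S. degree q \<le> e \<and> coeff q e = Gcd (?L e)"
      proof (cases "e \<le> D")
        case True
        then show ?thesis using w wS by blast
      next
        case False
        let ?q = "monom 1 (e - D) * w D"
        have "?q \<in> I \<inter> S" using w wS I S by (auto intro: int_poly_ideal_monom_mult)
        moreover have "degree ?q \<le> e"
          using degree_monom_mult_le[of "e - D" "w D"] w(2)[of D] False by linarith
        moreover have "coeff ?q e = Gcd (?L e)"
          using coeff_monom_mult_shift[of "e - D" "w D" D] w(3)[of D] D[of e] False by simp
        ultimately show ?thesis by blast
      qed
    qed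
  qed
qed


section \<open>Subgroups invariant under an automorphism\<close>

locale comm_group_automorphism = comm_group K for K (structure) +
  fixes \<phi> :: "'a \<Rightarrow> 'a"
  assumes automorphism: "\<phi> \<in> auto K"
begin

abbreviation act :: "int \<Rightarrow> 'a \<Rightarrow> 'a" where
  "act \<equiv> aut_pow K \<phi>"

lemma funpow_hom: "f \<in> hom K K \<Longrightarrow> f ^^ n \<in> hom K K"
  by (induction n) (auto simp: hom_def Pi_def)

lemma automorphism_iso: "\<phi> \<in> iso K K"
  using automorphism by (simp add: auto_def iso_def Bij_def)

lemma act_hom: "act m \<in> hom K K"
proof -
  from automorphism_iso have "\<phi> \<in> hom K K" "inv_into (carrier K) \<phi> \<in> hom K K"
    using iso_set_sym by (auto simp: iso_def)
  then show ?thesis by (simp add: aut_pow_def funpow_hom)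
qed

lemma act_group_hom: "group_hom K K (act m)"
  using act_hom by (simp add: group_hom_def group_hom_axioms_def is_group)

lemma act_closed [simp]: "x \<in> carrier K \<Longrightarrow> act m x \<in> carrier K"
  using act_hom by (rule hom_in_carrier)

lemma act_mult [simp]: "x \<in> carrier K \<Longrightarrow> y \<in> carrier K \<Longrightarrow> act m (x \<otimes> y) = act m x \<otimes> act m y"
  using act_hom by (simp add: hom_mult)

lemma act_inv [simp]: "x \<in> carrier K \<Longrightarrow> act m (inv x) = inv (act m x)"
  using act_group_hom by (rule group_hom.hom_inv)

lemma act_one [simp]: "act m \<one> = \<one>"
  using act_group_hom by (rule group_hom.hom_one)

lemma act_of_nat: "act (int n) = \<phi> ^^ n"
  by (simp add: aut_pow_def)

lemma act_zero [simp]: "act 0 x = x"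
  by (simp add: aut_pow_def)

lemma act_1: "act 1 = \<phi>"
  by (simp add: aut_pow_def)

lemma phi_closed [simp]: "x \<in> carrier K \<Longrightarrow> \<phi> x \<in> carrier K"
  using act_closed[of x 1] by (simp add: act_1)

lemma phi_one [simp]: "\<phi> \<one> = \<one>"
  using act_one[of 1] by (simp add: act_1)

lemma phi_mult [simp]: "x \<in> carrier K \<Longrightarrow> y \<in> carrier K \<Longrightarrow> \<phi> (x \<otimes> y) = \<phi> x \<otimes> \<phi> y"
  using act_mult[of x y 1] by (simp add: act_1)

lemma act_succ: "x \<in> carrier K \<Longrightarrow> act (m + 1) x = \<phi> (act m x)"
proof (cases "0 \<le> m")
  case True
  then show ?thesis by (simp add: aut_pow_def nat_add_distrib)
next
  case False
  assume x: "x \<in> carrier K"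
  define \<psi> where "\<psi> = inv_into (carrier K) \<phi>"
  define k where "k = nat (- m - 1)"
  have m: "m = - int (Suc k)" using False by (simp add: k_def)
  have "act (m + 1) x = (\<psi> ^^ k) x"
    by (cases k) (simp_all add: m aut_pow_def \<psi>_def nat_add_distrib)
  moreover have "act m x = \<psi> ((\<psi> ^^ k) x)"
    by (simp add: m aut_pow_def \<psi>_def nat_add_distrib)
  ultimately have "act m x = \<psi> (act (m + 1) x)" by simp
  moreover have "act (m + 1) x \<in> carrier K" using x by simp
  moreover have "bij_betw \<phi> (carrier K) (carrier K)"
    using automorphism_iso by (simp add: iso_def)
  ultimately show ?thesis by (simp add: \<psi>_def bij_betw_inv_into_right)
qed

lemma act_add: "x \<in> carrier K \<Longrightarrow> act (m + n) x = act m (act n x)"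
proof (induction m rule: int_induct[where k = 0])
  case base
  then show ?case by simp
next
  case (step1 i)
  have "act (i + 1 + n) x = \<phi> (act (i + n) x)"
    using act_succ[OF step1.prems, of "i + n"] by (simp add: ac_simps)
  also have "\<dots> = act (i + 1) (act n x)"
    using step1 act_succ[of "act n x" i] by simp
  finally show ?case .
next
  case (step2 i)
  have "inj_on \<phi> (carrier K)"
    using automorphism_iso by (simp add: iso_def bij_betw_def)
  moreover have "\<phi> (act (i - 1 + n) x) = \<phi> (act (i - 1) (act n x))"
    using step2 act_succ[of x "i - 1 + n"] act_succ[of "act n x" "i - 1"] by simp
  ultimately show ?case using step2.prems by (simp add: inj_on_def)
qed

definition invariant_subgroup :: "'a set \<Rightarrow> bool" where
  "invariant_subgroup H \<longleftrightarrow> subgroup H K \<and> (\<forall>m. \<forall>x\<in>H. act m x \<in> H)"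

lemma invariant_subgroup_subset: "invariant_subgroup H \<Longrightarrow> H \<subseteq> carrier K"
  by (simp add: invariant_subgroup_def subgroup.subset)

lemma invariant_subgroup_funpow: "invariant_subgroup H \<Longrightarrow> x \<in> H \<Longrightarrow> (\<phi> ^^ n) x \<in> H"
  by (simp add: invariant_subgroup_def flip: act_of_nat)

lemma act_funpow_cancel: "x \<in> carrier K \<Longrightarrow> act (- int n) ((\<phi> ^^ n) x) = x"
  using act_add[of x "- int n" "int n"] by (simp add: act_of_nat)

lemma invariant_subgroup_funpow_cancel:
  assumes "invariant_subgroup H" and "x \<in> carrier K" and "(\<phi> ^^ n) x \<in> H"
  shows "x \<in> H"
proof -
  have "act (- int n) ((\<phi> ^^ n) x) \<in> H" using assms(1,3) by (simp add: invariant_subgroup_def)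
  then show ?thesis using act_funpow_cancel[OF assms(2)] by simp
qed

lemma invariant_subgroup_Int:
  "invariant_subgroup H \<Longrightarrow> invariant_subgroup H' \<Longrightarrow> invariant_subgroup (H \<inter> H')"
  by (simp add: invariant_subgroup_def subgroups_Inter_pair)

lemma invariant_subgroup_image: "invariant_subgroup H \<Longrightarrow> \<phi> ` H = H"
proof
  assume H: "invariant_subgroup H"
  then show "\<phi> ` H \<subseteq> H" using invariant_subgroup_funpow[OF H, of _ 1] by auto
  show "H \<subseteq> \<phi> ` H"
  proof
    fix x assume x: "x \<in> H"
    then have "act (- 1) x \<in> H" using H by (simp add: invariant_subgroup_def)
    moreover have "\<phi> (act (- 1) x) = x"
      using act_add[of x 1 "- 1"] x invariant_subgroup_subset[OF H] by (auto simp: act_1)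
    ultimately show "x \<in> \<phi> ` H" by force
  qed
qed

definition orbit_span :: "'a set \<Rightarrow> 'a set" where
  "orbit_span A = generate K {act m x | m x. x \<in> A}"

lemma subset_orbit_span: "A \<subseteq> orbit_span A"
proof
  fix x assume "x \<in> A"
  then have "x \<in> {act m x | m x. x \<in> A}" by (intro CollectI exI[of _ 0] exI[of _ x]) simp
  then show "x \<in> orbit_span A" unfolding orbit_span_def by (rule generate.incl)
qed

lemma orbit_span_least:
  assumes "A \<subseteq> H" and "invariant_subgroup H"
  shows "orbit_span A \<subseteq> H"
proof -
  have "{act m x | m x. x \<in> A} \<subseteq> H"
    using assms unfolding invariant_subgroup_def by blast
  then show ?thesis unfolding orbit_span_def
    by (rule generate_subgroup_incl) (use assms(2) in \<open>simp add: invariant_subgroup_def\<close>)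
qed

lemma orbit_span_invariant:
  assumes "A \<subseteq> carrier K"
  shows "invariant_subgroup (orbit_span A)"
proof -
  define Orb where "Orb = {act m x | m x. x \<in> A}"
  have Orb: "Orb \<subseteq> carrier K" using assms by (auto simp: Orb_def)
  have "act m ` generate K Orb \<subseteq> generate K Orb" for m
  proof -
    have "act m ` Orb \<subseteq> Orb"
    proof (rule image_subsetI)
      fix y assume "y \<in> Orb"
      then obtain n x where "y = act n x" "x \<in> A" by (auto simp: Orb_def)
      then have "act m y = act (m + n) x" using assms \<open>x \<in> A\<close> by (auto simp: act_add)
      then show "act m y \<in> Orb" using \<open>x \<in> A\<close> by (auto simp: Orb_def)
    qed
    then have "generate K (act m ` Orb) \<subseteq> generate K Orb" by (rule mono_generate)
    then show ?thesis using group_hom.generate_img[OF act_group_hom Orb] by simp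
  qed
  then show ?thesis
    using generate_is_subgroup[OF Orb] unfolding invariant_subgroup_def orbit_span_def Orb_def[symmetric]
    by blast
qed

lemma orbit_span_empty: "orbit_span {} = {\<one>}"
  by (simp add: orbit_span_def generate_empty)

lemma orbit_span_mono: "A \<subseteq> B \<Longrightarrow> orbit_span A \<subseteq> orbit_span B"
  unfolding orbit_span_def by (rule mono_generate) blast

lemma orbit_span_Un_orbit_span:
  assumes "A \<union> B \<subseteq> carrier K"
  shows "orbit_span (A \<union> orbit_span B) = orbit_span (A \<union> B)"
proof
  show "orbit_span (A \<union> orbit_span B) \<subseteq> orbit_span (A \<union> B)"
  proof (rule orbit_span_least[OF _ orbit_span_invariant[OF assms]])
    have "orbit_span B \<subseteq> orbit_span (A \<union> B)" by (rule orbit_span_mono) blast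
    then show "A \<union> orbit_span B \<subseteq> orbit_span (A \<union> B)" using subset_orbit_span[of "A \<union> B"] by blast
  qed
  show "orbit_span (A \<union> B) \<subseteq> orbit_span (A \<union> orbit_span B)"
    using subset_orbit_span[of B] by (intro orbit_span_mono) blast
qed

section \<open>Polynomials in \<open>\<phi>\<close>\<close>

fun coeffs_act :: "int list \<Rightarrow> 'a \<Rightarrow> 'a" where
  "coeffs_act [] y = \<one>"
| "coeffs_act (c # cs) y = y [^] c \<otimes> \<phi> (coeffs_act cs y)"

text \<open>The action of \<open>\<int>[t]\<close> on \<open>K\<close> with \<open>t\<close> acting as \<open>\<phi>\<close>:
  \<open>poly_act p y = \<Prod>i. \<phi>\<^sup>i(y) [^] coeff p i\<close>, evaluated by Horner's rule.\<close>
definition poly_act :: "int poly \<Rightarrow> 'a \<Rightarrow> 'a" where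
  "poly_act p y = coeffs_act (coeffs p) y"

lemma coeffs_act_closed [simp]: "y \<in> carrier K \<Longrightarrow> coeffs_act cs y \<in> carrier K"
  by (induction cs) auto

lemma poly_act_0 [simp]: "poly_act 0 y = \<one>"
  by (simp add: poly_act_def)

lemma poly_act_pCons:
  "y \<in> carrier K \<Longrightarrow> poly_act (pCons c p) y = y [^] c \<otimes> \<phi> (poly_act p y)"
  by (cases "p = 0 \<and> c = 0") (auto simp: poly_act_def)

lemma poly_act_closed [simp]: "y \<in> carrier K \<Longrightarrow> poly_act p y \<in> carrier K"
  by (simp add: poly_act_def)

lemma poly_act_1: "y \<in> carrier K \<Longrightarrow> poly_act 1 y = y"
  using poly_act_pCons[of y 1 0] by (simp add: one_pCons)

lemma poly_act_add:
  assumes "y \<in> carrier K"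
  shows "poly_act (p + q) y = poly_act p y \<otimes> poly_act q y"
proof (induction p arbitrary: q rule: pCons_induct)
  case 0
  then show ?case using assms by simp
next
  case (pCons c p)
  obtain d q' where q: "q = pCons d q'" by (cases q)
  have "poly_act (pCons c p + q) y = y [^] (c + d) \<otimes> \<phi> (poly_act p y \<otimes> poly_act q' y)"
    using assms pCons.IH by (simp add: q poly_act_pCons)
  also have "\<dots> = (y [^] c \<otimes> \<phi> (poly_act p y)) \<otimes> (y [^] d \<otimes> \<phi> (poly_act q' y))"
    using assms by (simp add: int_pow_mult m_ac)
  finally show ?case using assms by (simp add: q poly_act_pCons)
qed

lemma poly_act_uminus:
  assumes "y \<in> carrier K"
  shows "poly_act (- p) y = inv (poly_act p y)"
proof -
  have "poly_act (- p) y \<otimes> poly_act p y = \<one>"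
    using poly_act_add[OF assms, of "- p" p] by simp
  then show ?thesis using assms by (simp add: inv_equality)
qed

lemma poly_act_coset_mult:
  assumes "subgroup M K" and "a \<in> carrier K"
    and "u \<in> poly_act p a <# M" and "v \<in> poly_act q a <# M"
  shows "u \<otimes> v \<in> poly_act (p + q) a <# M"
proof -
  obtain k l where kl: "k \<in> M" "l \<in> M" "u = poly_act p a \<otimes> k" "v = poly_act q a \<otimes> l"
    using assms(3,4) by (auto simp: l_coset_def)
  have "k \<in> carrier K" "l \<in> carrier K" using kl assms(1) subgroup.subset by blast+
  then have "u \<otimes> v = poly_act (p + q) a \<otimes> (k \<otimes> l)"
    using kl assms(2) by (simp add: poly_act_add m_ac)
  moreover have "k \<otimes> l \<in> M" using kl assms(1) by (simp add: subgroup.m_closed)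
  ultimately show ?thesis by (auto simp: l_coset_def)
qed

lemma poly_act_coset_inv:
  assumes "subgroup M K" and "a \<in> carrier K" and "u \<in> poly_act p a <# M"
  shows "inv u \<in> poly_act (- p) a <# M"
proof -
  obtain k where k: "k \<in> M" "u = poly_act p a \<otimes> k"
    using assms(3) by (auto simp: l_coset_def)
  have "k \<in> carrier K" using k assms(1) subgroup.subset by blast
  then have "inv u = poly_act (- p) a \<otimes> inv k"
    using k assms(2) by (simp add: poly_act_uminus inv_mult)
  moreover have "inv k \<in> M" using k assms(1) by (simp add: subgroup.m_inv_closed)
  ultimately show ?thesis by (auto simp: l_coset_def)
qed

lemma poly_act_coset_phi:
  assumes "invariant_subgroup M" and "a \<in> carrier K" and "u \<in> poly_act p a <# M"
  shows "\<phi> u \<in> poly_act (pCons 0 p) a <# M"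
proof -
  obtain k where k: "k \<in> M" "u = poly_act p a \<otimes> k"
    using assms(3) by (auto simp: l_coset_def)
  have "k \<in> carrier K" using k assms(1) invariant_subgroup_subset by blast
  then have "\<phi> u = poly_act (pCons 0 p) a \<otimes> \<phi> k"
    using k assms(2) by (simp add: poly_act_pCons)
  moreover have "\<phi> k \<in> M" using invariant_subgroup_funpow[OF assms(1) k(1), of 1] by simp
  ultimately show ?thesis by (auto simp: l_coset_def)
qed

lemma int_poly_ideal_coset_meeting:
  assumes a: "a \<in> carrier K" and M: "invariant_subgroup M" and H: "invariant_subgroup H"
  shows "int_poly_ideal {p. H \<inter> (poly_act p a <# M) \<noteq> {}}"
proof -
  have MK: "subgroup M K" and HK: "subgroup H K" using M H by (simp_all add: invariant_subgroup_def)
  have "\<one> \<in> H \<inter> (poly_act 0 a <# M)"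
    using MK HK by (simp add: lcos_mult_one subgroup.subset subgroup.one_closed)
  moreover have "H \<inter> (poly_act (p - q) a <# M) \<noteq> {}"
    if "u \<in> H \<inter> (poly_act p a <# M)" "v \<in> H \<inter> (poly_act q a <# M)" for p q u v
  proof -
    have "u \<otimes> inv v \<in> H" using that HK by (simp add: subgroup.m_closed subgroup.m_inv_closed)
    moreover have "u \<otimes> inv v \<in> poly_act (p + - q) a <# M"
      using that by (intro poly_act_coset_mult poly_act_coset_inv MK a) auto
    ultimately show ?thesis by auto
  qed
  moreover have "H \<inter> (poly_act (pCons 0 p) a <# M) \<noteq> {}"
    if "u \<in> H \<inter> (poly_act p a <# M)" for p u
    using that invariant_subgroup_funpow[OF H, of u 1] poly_act_coset_phi[OF M a, of u p] by auto
  ultimately show ?thesis unfolding int_poly_ideal_def by blast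
qed

lemma invariant_subgroup_eventually_in:
  assumes Y: "subgroup Y K" and phi_Y: "\<And>y. y \<in> Y \<Longrightarrow> \<phi> y \<in> Y"
  shows "invariant_subgroup {x \<in> carrier K. \<exists>n. (\<phi> ^^ n) x \<in> Y}" (is "invariant_subgroup ?T")
proof -
  have funpow_Y: "(\<phi> ^^ n) y \<in> Y" if "y \<in> Y" for n y
    using that by (induction n) (auto intro: phi_Y)
  have "subgroup ?T K"
  proof (rule subgroupI)
    show "?T \<noteq> {}" using subgroup.one_closed[OF Y] by (auto intro!: exI[of _ 0])
  next
    fix x assume "x \<in> ?T"
    then obtain n where "x \<in> carrier K" "(\<phi> ^^ n) x \<in> Y" by blast
    then have "(\<phi> ^^ n) (inv x) \<in> Y"
      using subgroup.m_inv_closed[OF Y] act_inv[of x "int n"] by (simp add: act_of_nat)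
    then show "inv x \<in> ?T" using \<open>x \<in> carrier K\<close> by auto
  next
    fix x y assume "x \<in> ?T" "y \<in> ?T"
    then obtain m n where x: "x \<in> carrier K" "(\<phi> ^^ m) x \<in> Y" and y: "y \<in> carrier K" "(\<phi> ^^ n) y \<in> Y"
      by blast
    have "(\<phi> ^^ (n + m)) (x \<otimes> y) = (\<phi> ^^ n) ((\<phi> ^^ m) x) \<otimes> (\<phi> ^^ m) ((\<phi> ^^ n) y)"
      using x(1) y(1) by (simp add: act_of_nat[symmetric] act_add[symmetric] add.commute)
    then have "(\<phi> ^^ (n + m)) (x \<otimes> y) \<in> Y"
      using x y funpow_Y subgroup.m_closed[OF Y] by simp
    then show "x \<otimes> y \<in> ?T" using x(1) y(1) by blast
  qed auto
  moreover have "act m x \<in> ?T" if "x \<in> ?T" for m x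
  proof -
    obtain n where x: "x \<in> carrier K" "(\<phi> ^^ n) x \<in> Y" using \<open>x \<in> ?T\<close> by blast
    define k where "k = nat (- m)"
    have "(\<phi> ^^ (n + k)) (act m x) = (\<phi> ^^ nat (m + int k)) ((\<phi> ^^ n) x)"
      using x(1) by (simp add: act_of_nat[symmetric] act_add[symmetric] k_def algebra_simps)
    then have "(\<phi> ^^ (n + k)) (act m x) \<in> Y" using x(2) funpow_Y by simp
    then show ?thesis using x(1) by auto
  qed
  ultimately show ?thesis by (simp add: invariant_subgroup_def)
qed

text \<open>Elements \<open>\<phi>\<^sup>-\<^sup>k(a)\<close> are not polynomial in \<open>\<phi>\<close> applied to \<open>a\<close>, but they become so
  after applying a power of \<open>\<phi>\<close>.\<close>
lemma orbit_span_insert_poly_coset: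
  assumes a: "a \<in> carrier K" and A: "A \<subseteq> carrier K" and x: "x \<in> orbit_span (insert a A)"
  obtains n p where "(\<phi> ^^ n) x \<in> poly_act p a <# orbit_span A"
proof -
  define M where "M = orbit_span A"
  have M: "invariant_subgroup M" and MK: "subgroup M K"
    using orbit_span_invariant[OF A] by (simp_all add: M_def invariant_subgroup_def)
  define Y where "Y = (\<Union>p. poly_act p a <# M)"
  have "\<one> <# M = M" using MK by (simp add: lcos_mult_one subgroup.subset)
  then have M_Y: "M \<subseteq> Y" unfolding Y_def using poly_act_0[of a] by (metis UN_upper UNIV_I)
  have "subgroup Y K"
  proof (rule subgroupI)
    show "Y \<subseteq> carrier K"
      using a MK subgroup.subset by (fastforce simp: Y_def l_coset_def)
    show "Y \<noteq> {}" using M_Y subgroup.one_closed[OF MK] by blast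
    show "inv u \<in> Y" if "u \<in> Y" for u
      using that poly_act_coset_inv[OF MK a] by (auto simp: Y_def)
    show "u \<otimes> v \<in> Y" if "u \<in> Y" "v \<in> Y" for u v
      using that poly_act_coset_mult[OF MK a] unfolding Y_def by blast
  qed
  moreover have "\<phi> u \<in> Y" if "u \<in> Y" for u
    using that poly_act_coset_phi[OF M a] by (auto simp: Y_def)
  ultimately have T: "invariant_subgroup {x \<in> carrier K. \<exists>n. (\<phi> ^^ n) x \<in> Y}"
    by (rule invariant_subgroup_eventually_in)
  have "a \<in> poly_act 1 a <# M"
    using a subgroup.one_closed[OF MK] by (auto simp: l_coset_def poly_act_1 intro!: bexI[of _ \<one>])
  then have "insert a A \<subseteq> Y" using M_Y subset_orbit_span[of A] unfolding Y_def M_def by blast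
  then have "insert a A \<subseteq> {x \<in> carrier K. \<exists>n. (\<phi> ^^ n) x \<in> Y}"
    using a A by (auto intro!: exI[of _ 0])
  then have "x \<in> {x \<in> carrier K. \<exists>n. (\<phi> ^^ n) x \<in> Y}"
    using orbit_span_least[OF _ T] x by blast
  then show thesis using that by (auto simp: Y_def M_def)
qed

lemma mem_subgroup_if_same_coset:
  assumes "subgroup S K" and "subgroup H K" and "S \<subseteq> H" and "H \<inter> M \<subseteq> S"
    and "x \<in> H" and "y \<in> S" and "x \<otimes> inv y \<in> M"
  shows "x \<in> S"
proof -
  have "inv y \<in> H" using assms by (blast intro: subgroup.m_inv_closed)
  then have "x \<otimes> inv y \<in> H \<inter> M" using assms by (simp add: subgroup.m_closed)
  then have "x \<otimes> inv y \<otimes> y \<in> S" using assms by (simp add: subset_iff subgroup.m_closed)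
  moreover have "x \<in> carrier K" "y \<in> carrier K" using assms subgroup.subset by blast+
  ultimately show ?thesis by (simp add: m_assoc)
qed

text \<open>The polynomials whose coset meets \<open>H\<close> form an ideal of \<open>\<int>[t]\<close>; lifting finitely many
  generators of it to \<open>H\<close> gives \<open>B\<close>.\<close>
lemma invariant_subgroup_cosets_finitely_spanned:
  assumes a: "a \<in> carrier K" and M: "invariant_subgroup M" and H: "invariant_subgroup H"
  obtains B where "finite B" and "B \<subseteq> H"
    and "\<And>p. H \<inter> (poly_act p a <# M) \<subseteq> orbit_span (B \<union> (H \<inter> M))"
proof -
  define J where "J V = {p. V \<inter> (poly_act p a <# M) \<noteq> {}}" for V
  obtain G where G: "finite G" "G \<subseteq> J H" "\<And>I. int_poly_ideal I \<Longrightarrow> G \<subseteq> I \<Longrightarrow> J H \<subseteq> I"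
    using int_poly_ideal_finitely_generated[OF int_poly_ideal_coset_meeting[OF a M H]]
    unfolding J_def by blast
  have "\<forall>g\<in>G. \<exists>u. u \<in> H \<inter> (poly_act g a <# M)" using G(2) unfolding J_def by blast
  then obtain h where h: "\<And>g. g \<in> G \<Longrightarrow> h g \<in> H \<inter> (poly_act g a <# M)"
    by metis
  define S where "S = orbit_span (h ` G \<union> (H \<inter> M))"
  have hG_H: "h ` G \<subseteq> H" using h by blast
  have "h ` G \<union> (H \<inter> M) \<subseteq> carrier K" using hG_H invariant_subgroup_subset[OF H] by blast
  then have S: "invariant_subgroup S" unfolding S_def by (rule orbit_span_invariant)
  have S_H: "S \<subseteq> H" unfolding S_def using hG_H by (intro orbit_span_least[OF _ H]) blast
  have "G \<subseteq> J S"
    using h subset_orbit_span[of "h ` G \<union> (H \<inter> M)"] unfolding J_def S_def by blast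
  then have J_H_S: "J H \<subseteq> J S"
    using G(3) int_poly_ideal_coset_meeting[OF a M S] unfolding J_def by blast
  show thesis
  proof (rule that[OF _ hG_H])
    show "finite (h ` G)" using G(1) by simp
    fix p
    show "H \<inter> (poly_act p a <# M) \<subseteq> orbit_span (h ` G \<union> (H \<inter> M))"
      unfolding S_def[symmetric]
    proof
      fix x assume x: "x \<in> H \<inter> (poly_act p a <# M)"
      then have "p \<in> J S" using J_H_S unfolding J_def by blast
      then obtain y where y: "y \<in> S" "y \<in> poly_act p a <# M" unfolding J_def by blast
      have MK: "subgroup M K" and HK: "subgroup H K" and SK: "subgroup S K"
        using M H S by (simp_all add: invariant_subgroup_def)
      have "x \<otimes> inv y \<in> poly_act (p + - p) a <# M"
        using x y by (intro poly_act_coset_mult poly_act_coset_inv MK a) auto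
      then have "x \<otimes> inv y \<in> M" using MK by (simp add: lcos_mult_one subgroup.subset)
      moreover have "H \<inter> M \<subseteq> S"
        using subset_orbit_span[of "h ` G \<union> (H \<inter> M)"] unfolding S_def by blast
      moreover have "x \<in> H" using x by blast
      ultimately show "x \<in> S" by (intro mem_subgroup_if_same_coset[OF SK HK S_H _ _ y(1)])
    qed
  qed
qed

theorem invariant_subgroup_finitely_spanned:
  assumes "finite A" and "A \<subseteq> carrier K" and "invariant_subgroup H" and "H \<subseteq> orbit_span A"
  shows "\<exists>B. finite B \<and> orbit_span B = H"
  using assms
proof (induction A arbitrary: H rule: finite_induct)
  case empty
  then have "H = {\<one>}"
    using subgroup.one_closed[of H K] by (auto simp: orbit_span_empty invariant_subgroup_def)
  then show ?case using orbit_span_empty by blast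
next
  case (insert a A)
  have a: "a \<in> carrier K" and A: "A \<subseteq> carrier K" using insert.prems(1) by auto
  define M where "M = orbit_span A"
  have M: "invariant_subgroup M" unfolding M_def using A by (rule orbit_span_invariant)
  have H: "invariant_subgroup H" by (rule insert.prems(2))
  obtain B0 where B0: "finite B0" "orbit_span B0 = H \<inter> M"
    using insert.IH[OF A invariant_subgroup_Int[OF H M]] unfolding M_def by blast
  obtain B1 where B1: "finite B1" "B1 \<subseteq> H"
    and cosets: "\<And>p. H \<inter> (poly_act p a <# M) \<subseteq> orbit_span (B1 \<union> (H \<inter> M))"
    using invariant_subgroup_cosets_finitely_spanned[OF a M H] by blast
  have B0_H: "B0 \<subseteq> H \<inter> M" using B0(2) subset_orbit_span[of B0] by blast
  have B_carrier: "B1 \<union> B0 \<subseteq> carrier K" using B1(2) B0_H invariant_subgroup_subset[OF H] by blast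
  have "H \<subseteq> orbit_span (B1 \<union> B0)"
  proof
    fix x assume x: "x \<in> H"
    then obtain n p where "(\<phi> ^^ n) x \<in> poly_act p a <# M"
      using orbit_span_insert_poly_coset[OF a A] insert.prems(3) unfolding M_def by blast
    moreover have "(\<phi> ^^ n) x \<in> H" using H x by (rule invariant_subgroup_funpow)
    ultimately have "(\<phi> ^^ n) x \<in> orbit_span (B1 \<union> (H \<inter> M))" using cosets by blast
    then have "(\<phi> ^^ n) x \<in> orbit_span (B1 \<union> B0)"
      using orbit_span_Un_orbit_span[OF B_carrier] B0(2) by simp
    moreover have "x \<in> carrier K" using x invariant_subgroup_subset[OF H] by blast
    ultimately show "x \<in> orbit_span (B1 \<union> B0)"
      by (rule invariant_subgroup_funpow_cancel[OF orbit_span_invariant[OF B_carrier], rotated])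
  qed
  moreover have "orbit_span (B1 \<union> B0) \<subseteq> H" using B1(2) B0_H H by (intro orbit_span_least) auto
  ultimately show ?case using B1(1) B0(1) by (intro exI[of _ "B1 \<union> B0"]) auto
qed

section \<open>The semidirect product\<close>

lemma semidirect_Z_simps [simp]:
  "carrier (semidirect_Z K \<phi>) = carrier K \<times> UNIV"
  "\<one>\<^bsub>semidirect_Z K \<phi>\<^esub> = (\<one>, 0)"
  "(a, m) \<otimes>\<^bsub>semidirect_Z K \<phi>\<^esub> (b, n) = (a \<otimes> act m b, m + n)"
  by (simp_all add: semidirect_Z_def)

lemma semidirect_Z_group: "group (semidirect_Z K \<phi>)"
proof (rule groupI)
  fix x y assume "x \<in> carrier (semidirect_Z K \<phi>)" "y \<in> carrier (semidirect_Z K \<phi>)"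
  then show "x \<otimes>\<^bsub>semidirect_Z K \<phi>\<^esub> y \<in> carrier (semidirect_Z K \<phi>)"
    by (cases x, cases y) auto
next
  fix x y z
  assume "x \<in> carrier (semidirect_Z K \<phi>)" "y \<in> carrier (semidirect_Z K \<phi>)"
    "z \<in> carrier (semidirect_Z K \<phi>)"
  then obtain a m b n c l where xyz: "x = (a, m)" "y = (b, n)" "z = (c, l)"
    and abc: "a \<in> carrier K" "b \<in> carrier K" "c \<in> carrier K"
    by (cases x, cases y, cases z) auto
  have "act m (b \<otimes> act n c) = act m b \<otimes> act (m + n) c" using abc by (simp add: act_add)
  then show "x \<otimes>\<^bsub>semidirect_Z K \<phi>\<^esub> y \<otimes>\<^bsub>semidirect_Z K \<phi>\<^esub> z
    = x \<otimes>\<^bsub>semidirect_Z K \<phi>\<^esub> (y \<otimes>\<^bsub>semidirect_Z K \<phi>\<^esub> z)"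
    using abc by (simp add: xyz m_assoc add.assoc)
next
  fix x assume "x \<in> carrier (semidirect_Z K \<phi>)"
  then obtain a m where x: "x = (a, m)" and a: "a \<in> carrier K" by (cases x) auto
  have "(act (- m) (inv a), - m) \<otimes>\<^bsub>semidirect_Z K \<phi>\<^esub> x = \<one>\<^bsub>semidirect_Z K \<phi>\<^esub>"
    using a by (simp add: x act_add[symmetric])
  then show "\<exists>y\<in>carrier (semidirect_Z K \<phi>). y \<otimes>\<^bsub>semidirect_Z K \<phi>\<^esub> x = \<one>\<^bsub>semidirect_Z K \<phi>\<^esub>"
    using a by force
qed auto

lemma semidirect_Z_inv:
  assumes "a \<in> carrier K"
  shows "inv\<^bsub>semidirect_Z K \<phi>\<^esub> (a, m) = (act (- m) (inv a), - m)"
proof -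
  have "(act (- m) (inv a), - m) \<otimes>\<^bsub>semidirect_Z K \<phi>\<^esub> (a, m) = \<one>\<^bsub>semidirect_Z K \<phi>\<^esub>"
    using assms by (simp add: act_add[symmetric])
  then show ?thesis using group.inv_equality[OF semidirect_Z_group] assms by simp
qed

lemma semidirect_Z_finitely_generated_orbit_span:
  assumes "finitely_generated_group (semidirect_Z K \<phi>)"
  obtains A where "finite A" and "A \<subseteq> carrier K" and "orbit_span A = carrier K"
proof -
  obtain S where S: "finite S" "S \<subseteq> carrier (semidirect_Z K \<phi>)"
    "generate (semidirect_Z K \<phi>) S = carrier (semidirect_Z K \<phi>)"
    using assms unfolding finitely_generated_group_def by blast
  have A: "fst ` S \<subseteq> carrier K" using S(2) by auto
  have span: "invariant_subgroup (orbit_span (fst ` S))" using A by (rule orbit_span_invariant)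
  then have span_K: "subgroup (orbit_span (fst ` S)) K" by (simp add: invariant_subgroup_def)
  have "fst u \<in> orbit_span (fst ` S)" if "u \<in> generate (semidirect_Z K \<phi>) S" for u
    using that
  proof induction
    case one
    then show ?case using span_K by (simp add: subgroup.one_closed)
  next
    case (incl u)
    then show ?case using subset_orbit_span[of "fst ` S"] by blast
  next
    case (inv u)
    obtain a m where u: "u = (a, m)" by (cases u)
    have "a \<in> carrier K" "a \<in> orbit_span (fst ` S)"
      using inv S(2) subset_orbit_span[of "fst ` S"] u by force+
    then show ?case
      using span span_K by (simp add: u semidirect_Z_inv invariant_subgroup_def subgroup.m_inv_closed)
  next
    case (eng u v)
    obtain a m b n where uv: "u = (a, m)" "v = (b, n)" by (cases u, cases v)
    then show ?case
      using eng.IH span span_K by (simp add: invariant_subgroup_def subgroup.m_closed)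
  qed
  then have "carrier K \<subseteq> orbit_span (fst ` S)" using S(3) by force
  moreover have "orbit_span (fst ` S) \<subseteq> carrier K" using span by (rule invariant_subgroup_subset)
  ultimately show thesis using that[of "fst ` S"] S(1) A by blast
qed

section \<open>Periodic points\<close>

lemma act_funpow_commute: "x \<in> carrier K \<Longrightarrow> (\<phi> ^^ n) (act m x) = act m ((\<phi> ^^ n) x)"
  by (simp add: act_of_nat[symmetric] act_add[symmetric] add.commute)

lemma act_period:
  assumes "b \<in> carrier K" and "act n b = b"
  shows "act (n * k) b = b"
proof (induction k rule: int_induct[where k = 0])
  case (step1 i)
  then show ?case using assms act_add[of b "n * i" n] by (simp add: distrib_left)
next
  case (step2 i)
  then show ?case using assms act_add[of b "n * (i - 1)" n] by (simp add: algebra_simps)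
qed simp

lemma periodic_points_invariant: "invariant_subgroup (periodic_points K \<phi>)"
proof -
  have fix_mult: "(\<phi> ^^ (n * k)) x = x" if "(\<phi> ^^ n) x = x" for n k x
    using that by (induction k) (simp_all add: funpow_add)
  have "subgroup (periodic_points K \<phi>) K"
  proof (rule subgroupI)
    show "periodic_points K \<phi> \<subseteq> carrier K" by (auto simp: periodic_points_def)
    show "periodic_points K \<phi> \<noteq> {}" unfolding periodic_points_def by (force intro!: exI[of _ 1])
  next
    fix a assume "a \<in> periodic_points K \<phi>"
    then obtain n where "a \<in> carrier K" "n \<ge> 1" "(\<phi> ^^ n) a = a"
      unfolding periodic_points_def by blast
    then show "inv a \<in> periodic_points K \<phi>"
      using act_inv[of a "int n"] unfolding periodic_points_def by (auto simp: act_of_nat)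
  next
    fix a b assume "a \<in> periodic_points K \<phi>" "b \<in> periodic_points K \<phi>"
    then obtain m n where a: "a \<in> carrier K" "m \<ge> 1" "(\<phi> ^^ m) a = a"
      and b: "b \<in> carrier K" "n \<ge> 1" "(\<phi> ^^ n) b = b"
      unfolding periodic_points_def by blast
    have "(\<phi> ^^ (m * n)) (a \<otimes> b) = (\<phi> ^^ (m * n)) a \<otimes> (\<phi> ^^ (m * n)) b"
      using a b act_mult[of a b "int (m * n)"] by (simp only: act_of_nat)
    also have "\<dots> = a \<otimes> b"
      using fix_mult[OF a(3), of n] fix_mult[OF b(3), of m] by (simp add: mult.commute)
    finally show "a \<otimes> b \<in> periodic_points K \<phi>"
      using a b unfolding periodic_points_def by (auto intro!: exI[of _ "m * n"])
  qed
  moreover have "act m a \<in> periodic_points K \<phi>" if "a \<in> periodic_points K \<phi>" for m a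
    using that act_funpow_commute unfolding periodic_points_def by auto
  ultimately show ?thesis by (simp add: invariant_subgroup_def)
qed

lemma periodic_orbit:
  assumes "b \<in> carrier K" and "n \<ge> 1" and "(\<phi> ^^ n) b = b"
  shows "act m b \<in> (\<lambda>i. (\<phi> ^^ i) b) ` {..<n}"
proof -
  have "act m b = act (m mod int n) (act (int n * (m div int n)) b)"
    using assms(1) act_add[symmetric, of b "m mod int n" "int n * (m div int n)"] by simp
  also have "\<dots> = act (m mod int n) b" using assms by (simp add: act_period act_of_nat)
  also have "\<dots> = (\<phi> ^^ nat (m mod int n)) b"
    using assms(2) act_of_nat[of "nat (m mod int n)"] by simp
  finally have "act m b = (\<phi> ^^ nat (m mod int n)) b" .
  moreover have "nat (m mod int n) \<in> {..<n}" using assms(2) by (simp add: nat_less_iff)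
  ultimately show ?thesis by (rule image_eqI)
qed

lemma orbit_span_periodic_finitely_generated:
  assumes "finite B" and "B \<subseteq> periodic_points K \<phi>"
  obtains F where "finite F" and "generate K F = orbit_span B"
proof -
  have "\<forall>b\<in>B. \<exists>n. n \<ge> 1 \<and> (\<phi> ^^ n) b = b"
    using assms(2) unfolding periodic_points_def by blast
  then obtain per where per: "\<And>b. b \<in> B \<Longrightarrow> per b \<ge> 1 \<and> (\<phi> ^^ per b) b = b"
    by metis
  define F where "F = (\<Union>b\<in>B. (\<lambda>i. (\<phi> ^^ i) b) ` {..<per b})"
  have "{act m b | m b. b \<in> B} \<subseteq> F"
  proof
    fix y assume "y \<in> {act m b | m b. b \<in> B}"
    then obtain m b where y: "y = act m b" and b: "b \<in> B" by blast
    have "b \<in> carrier K" using b assms(2) by (auto simp: periodic_points_def)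
    then have "y \<in> (\<lambda>i. (\<phi> ^^ i) b) ` {..<per b}" using per[OF b] y by (simp add: periodic_orbit)
    then show "y \<in> F" using b unfolding F_def by blast
  qed
  moreover have "F \<subseteq> {act m b | m b. b \<in> B}"
  proof
    fix y assume "y \<in> F"
    then obtain b i where "y = act (int i) b" "b \<in> B" by (auto simp: F_def act_of_nat)
    then show "y \<in> {act m b | m b. b \<in> B}" by blast
  qed
  ultimately have "generate K F = orbit_span B" unfolding orbit_span_def by auto
  moreover have "finite F" using assms(1) by (simp add: F_def)
  ultimately show thesis using that by blast
qed

end

theorem corollary2p10:
  fixes K :: "('a, 'b) monoid_scheme" and \<phi> :: "'a \<Rightarrow> 'a"
  assumes "comm_group K"
    and "\<phi> \<in> auto K"
    and "finitely_generated_group (semidirect_Z K \<phi>)"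
  shows "subgroup (periodic_points K \<phi>) K
    \<and> finitely_generated_group (K\<lparr>carrier := periodic_points K \<phi>\<rparr>)
    \<and> \<phi> ` (periodic_points K \<phi>) = periodic_points K \<phi>"
proof -
  interpret comm_group_automorphism K \<phi>
    using assms(1,2) by (simp add: comm_group_automorphism_def comm_group_automorphism_axioms_def)
  let ?P = "periodic_points K \<phi>"
  have P: "invariant_subgroup ?P" by (rule periodic_points_invariant)
  obtain A where A: "finite A" "A \<subseteq> carrier K" "orbit_span A = carrier K"
    using semidirect_Z_finitely_generated_orbit_span[OF assms(3)] by blast
  obtain B where B: "finite B" "orbit_span B = ?P"
    using invariant_subgroup_finitely_spanned[OF A(1,2) P] A(3) invariant_subgroup_subset[OF P] by blast
  obtain F where F: "finite F" "generate K F = ?P"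
    using orbit_span_periodic_finitely_generated[OF B(1)] B(2) subset_orbit_span[of B] by metis
  have subgroup: "subgroup ?P K" using P by (simp add: invariant_subgroup_def)
  have "F \<subseteq> ?P" using F(2) generate.incl[of _ F K] by blast
  then have "generate (K\<lparr>carrier := ?P\<rparr>) F = ?P"
    using generate_consistent[OF _ subgroup] F(2) by simp
  then have "finitely_generated_group (K\<lparr>carrier := ?P\<rparr>)"
    unfolding finitely_generated_group_def using F(1) \<open>F \<subseteq> ?P\<close> by auto
  then show ?thesis using subgroup invariant_subgroup_image[OF P] by blast
qed

end
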